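(* Let $b>1$ be an integer, let $n=b+1$, and consider the 2-connected $(3,b)$-puzzle on $V=\{1,\dots,n\}$, i.e. the cycle set consisting of the two cycles $\alpha=(1\ 2\ 3)$ and $\beta=(2\ 3\ 4\ \dots\ n)$. Then any even permutation of $V$ can be generated in $O(n^2)$ shifts; that is, there is an absolute constant $K$ (independent of $b$) such that every even permutation of $V$ is a product of at most $Kn^2$ factors, each of which is one of $\alpha,\alpha^{-1},\beta,\beta^{-1}$.
   Context: Permutations are written in cycle notation. A shift along a cycle $(v_1\ \dots\ v_j)$ corresponds to applying the permutation $(v_1\ \dots\ v_j)$ or its inverse to the tokens placed on the vertices of $V$. *)

theory Defs
  imports "HOL-Combinatorics.Combinatorics"
begin

definition puz_alpha :: "nat \<Rightarrow> nat" where
  "puz_alpha = cycle_of_list [1, 2, 3]"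

definition puz_beta :: "nat \<Rightarrow> nat \<Rightarrow> nat" where
  "puz_beta n = cycle_of_list [2..<n+1]"

definition puz_shifts :: "nat \<Rightarrow> (nat \<Rightarrow> nat) set" where
  "puz_shifts n = {puz_alpha, inv puz_alpha, puz_beta n, inv (puz_beta n)}"

end

theory Submission
  imports Defs
begin

(* The permutation sigma = alpha beta swaps 1 and 2 and rotates 3, ..., n, so conjugation by
   sigma sends the 3-cycles (1 2 y) and (2 1 y) to (2 1 y+1) and (1 2 y+1). Starting from
   alpha = (1 2 3) and alpha^-1 = (2 1 3), every 3-cycle (1 2 y) and (2 1 y) is therefore a word
   of at most 4n shifts. A permutation of V is a product of at most 3n star transpositions (1 x),
   an even number of them if it is even, and each pair (1 x)(1 y) = ((1 x)(1 2)) ((1 2)(1 y)) is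
   a product of two such 3-cycles; this gives 12 n^2 shifts in total. *)

definition word_ball :: "('a \<Rightarrow> 'a) set \<Rightarrow> nat \<Rightarrow> ('a \<Rightarrow> 'a) set" where
  "word_ball S L = {foldr (\<circ>) ws id | ws. set ws \<subseteq> S \<and> length ws \<le> L}"

lemma foldr_comp_append: "foldr (\<circ>) (xs @ ys) id = foldr (\<circ>) xs id \<circ> foldr (\<circ>) ys id"
  by (induction xs) (simp_all add: comp_assoc)

lemma id_in_word_ball: "id \<in> word_ball S L"
  unfolding word_ball_def by (intro CollectI exI[of _ "[]"]) simp

lemma generator_in_word_ball: "s \<in> S \<Longrightarrow> 1 \<le> L \<Longrightarrow> s \<in> word_ball S L"
  unfolding word_ball_def by (intro CollectI exI[of _ "[s]"]) simp

lemma word_ball_mono: "p \<in> word_ball S L \<Longrightarrow> L \<le> M \<Longrightarrow> p \<in> word_ball S M"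
  unfolding word_ball_def by fastforce

lemma word_ball_comp:
  assumes "p \<in> word_ball S L" "q \<in> word_ball S M"
  shows "p \<circ> q \<in> word_ball S (L + M)"
proof -
  obtain ws vs where "set ws \<subseteq> S" "length ws \<le> L" "p = foldr (\<circ>) ws id"
    "set vs \<subseteq> S" "length vs \<le> M" "q = foldr (\<circ>) vs id"
    using assms unfolding word_ball_def by blast
  then show ?thesis
    unfolding word_ball_def
    by (intro CollectI exI[of _ "ws @ vs"]) (auto simp del: foldr_append simp: foldr_comp_append)
qed

lemma transpose_comp_transpose_eq_cycle:
  "distinct [a, b, c] \<Longrightarrow> transpose a b \<circ> transpose a c = cycle_of_list [b, a, c]"
  by (auto simp: fun_eq_iff transpose_def)

lemma cycle_of_list_nth:
  assumes "distinct cs" "Suc i < length cs"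
  shows "cycle_of_list cs (cs ! i) = cs ! Suc i"
proof -
  have "map (cycle_of_list cs) cs ! i = rotate 1 cs ! i"
    using cyclic_rotation[OF assms(1), of 1] by simp
  then show ?thesis
    using assms(2) by (simp add: nth_rotate1)
qed

lemma transpose_as_star_transpositions:
  assumes "a \<noteq> b"
  shows "\<exists>xs. set xs \<subseteq> {a, b} - {c} \<and> length xs \<le> 3
              \<and> apply_transps (map (Pair c) xs) = transpose a b"
proof -
  consider "a = c" | "b = c" | "a \<noteq> c" "b \<noteq> c" by blast
  then show ?thesis
  proof cases
    case 1
    then show ?thesis using assms by (intro exI[of _ "[b]"]) auto
  next
    case 2
    then show ?thesis using assms by (intro exI[of _ "[a]"]) (auto simp: transpose_commute)
  next
    case 3
    have "transpose a c \<circ> transpose c b \<circ> transpose a c = transpose a b"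
      by (rule transpose_comp_triple) (use assms 3 in auto)
    then show ?thesis
      using 3 by (intro exI[of _ "[a, b, a]"]) (auto simp: transpose_commute comp_assoc)
  qed
qed

lemma permutes_from_star_transpositions:
  "finite A \<Longrightarrow> p permutes A \<Longrightarrow>
    \<exists>xs. set xs \<subseteq> A - {c} \<and> length xs \<le> 3 * card A \<and> apply_transps (map (Pair c) xs) = p"
proof (induction A arbitrary: p rule: finite_induct)
  case empty
  then show ?case by (intro exI[of _ "[]"]) simp
next
  case (insert x A)
  have "transpose x (p x) \<circ> p permutes A"
    by (rule permutes_insert_lemma[OF insert.prems])
  then obtain ys where ys: "set ys \<subseteq> A - {c}" "length ys \<le> 3 * card A"
    "apply_transps (map (Pair c) ys) = transpose x (p x) \<circ> p"
    using insert.IH by blast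
  have p: "p = transpose x (p x) \<circ> apply_transps (map (Pair c) ys)"
    by (simp add: ys(3) comp_assoc[symmetric])
  have card: "card (insert x A) = Suc (card A)"
    using insert.hyps by simp
  show ?case
  proof (cases "p x = x")
    case True
    then show ?thesis using ys p card by (intro exI[of _ ys]) auto
  next
    case False
    have "p x \<in> insert x A"
      using permutes_in_image[OF insert.prems] by simp
    moreover obtain zs where "set zs \<subseteq> {x, p x} - {c}" "length zs \<le> 3"
      "apply_transps (map (Pair c) zs) = transpose x (p x)"
      using transpose_as_star_transpositions False by metis
    ultimately show ?thesis
      using ys p card by (intro exI[of _ "zs @ ys"]) auto
  qed
qed

lemma bij_puz_alpha: "bij puz_alpha"
  unfolding puz_alpha_def using cycle_permutes permutes_bij by blast

lemma bij_puz_beta: "bij (puz_beta n)"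
  unfolding puz_beta_def using cycle_permutes permutes_bij by blast

lemma inv_puz_alpha: "inv puz_alpha = cycle_of_list [2, 1, 3]"
proof (rule inv_unique_comp)
  show "puz_alpha \<circ> cycle_of_list [2, 1, 3] = id" "cycle_of_list [2, 1, 3] \<circ> puz_alpha = id"
    by (auto simp: puz_alpha_def fun_eq_iff transpose_def)
qed

lemma puz_beta_apply:
  assumes "2 \<le> y" "y < n"
  shows "puz_beta n y = Suc y"
proof -
  have idx: "[2..<n+1] ! (y - 2) = y" "[2..<n+1] ! Suc (y - 2) = Suc y"
    using assms by (simp_all del: upt_Suc)
  have "cycle_of_list [2..<n+1] ([2..<n+1] ! (y - 2)) = [2..<n+1] ! Suc (y - 2)"
    by (rule cycle_of_list_nth) (use assms in auto)
  then show ?thesis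
    unfolding idx puz_beta_def .
qed

lemma puz_beta_apply_1: "puz_beta n 1 = 1"
  by (simp add: puz_beta_def id_outside_supp)

definition puz_sigma :: "nat \<Rightarrow> nat \<Rightarrow> nat" where
  "puz_sigma n = puz_alpha \<circ> puz_beta n"

lemma puz_sigma_in_word_ball: "puz_sigma n \<in> word_ball (puz_shifts n) 2"
  using word_ball_comp[of puz_alpha "puz_shifts n" 1 "puz_beta n" 1]
  by (simp add: puz_sigma_def puz_shifts_def generator_in_word_ball numeral_2_eq_2)

lemma inv_puz_sigma_in_word_ball: "inv (puz_sigma n) \<in> word_ball (puz_shifts n) 2"
  using word_ball_comp[of "inv (puz_beta n)" "puz_shifts n" 1 "inv puz_alpha" 1]
  by (simp add: puz_sigma_def puz_shifts_def generator_in_word_ball numeral_2_eq_2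
      o_inv_distrib bij_puz_alpha bij_puz_beta)

lemma bij_puz_sigma: "bij (puz_sigma n)"
  unfolding puz_sigma_def using bij_puz_alpha bij_puz_beta by (rule bij_comp[rotated])

lemma puz_sigma_apply:
  shows "puz_sigma n 1 = 2"
    and "2 < n \<Longrightarrow> puz_sigma n 2 = 1"
    and "3 \<le> y \<Longrightarrow> y < n \<Longrightarrow> puz_sigma n y = Suc y"
  using puz_beta_apply_1[of n] puz_beta_apply[of 2 n] puz_beta_apply[of y n]
  by (simp_all add: puz_sigma_def puz_alpha_def transpose_def)

lemma puz_sigma_conj_cycle:
  assumes "3 \<le> y" "y < n"
  shows "puz_sigma n \<circ> cycle_of_list [1, 2, y] \<circ> inv (puz_sigma n) = cycle_of_list [2, 1, Suc y]"
    and "puz_sigma n \<circ> cycle_of_list [2, 1, y] \<circ> inv (puz_sigma n) = cycle_of_list [1, 2, Suc y]"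
  using assms conjugation_of_cycle[OF _ bij_puz_sigma, of "[1, 2, y]" n]
    conjugation_of_cycle[OF _ bij_puz_sigma, of "[2, 1, y]" n]
  by (simp_all add: puz_sigma_apply[simplified] del: cycle_of_list.simps)

lemma puz_three_cycles_in_word_ball:
  assumes "3 + k \<le> n"
  shows "cycle_of_list [1, 2, 3 + k] \<in> word_ball (puz_shifts n) (4 * k + 1)
       \<and> cycle_of_list [2, 1, 3 + k] \<in> word_ball (puz_shifts n) (4 * k + 1)"
  using assms
proof (induction k)
  case 0
  show ?case
    unfolding add_0_right mult_0_right add_0 inv_puz_alpha[symmetric] puz_alpha_def[symmetric]
    by (simp add: generator_in_word_ball puz_shifts_def)
next
  case (Suc k)
  have conj: "puz_sigma n \<circ> c \<circ> inv (puz_sigma n) \<in> word_ball (puz_shifts n) (4 * Suc k + 1)"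
    if "c \<in> word_ball (puz_shifts n) (4 * k + 1)" for c
    by (rule word_ball_mono[OF word_ball_comp[OF word_ball_comp[OF puz_sigma_in_word_ball that]
          inv_puz_sigma_in_word_ball]]) simp
  have "3 \<le> 3 + k" "3 + k < n"
    using Suc.prems by auto
  moreover have "3 + Suc k = Suc (3 + k)"
    by simp
  ultimately show ?case
    using Suc conj puz_sigma_conj_cycle[of "3 + k" n] by (metis Suc_leD)
qed

lemma puz_star_pair_in_word_ball:
  assumes "x \<in> {2..n}" "y \<in> {2..n}"
  shows "transpose 1 x \<circ> transpose 1 y \<in> word_ball (puz_shifts n) (8 * n)"
proof -
  have cycles: "cycle_of_list [1, 2, z] \<in> word_ball (puz_shifts n) (4 * n)
              \<and> cycle_of_list [2, 1, z] \<in> word_ball (puz_shifts n) (4 * n)" if "z \<in> {3..n}" for z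
  proof -
    have "3 + (z - 3) \<le> n" "3 + (z - 3) = z" "4 * (z - 3) + 1 \<le> 4 * n"
      using that by auto
    then show ?thesis
      using puz_three_cycles_in_word_ball[of "z - 3" n] word_ball_mono by metis
  qed
  have "transpose 1 x \<circ> transpose 1 2 \<in> word_ball (puz_shifts n) (4 * n)"
  proof (cases "x = 2")
    case False
    have "transpose 1 x \<circ> transpose 1 2 = cycle_of_list [x, 1, 2]"
      using False assms by (intro transpose_comp_transpose_eq_cycle) auto
    also have "\<dots> = cycle_of_list [1, 2, x]"
      using cycle_of_list_rotate_independent[of "[x, 1, 2]" 1] False assms by simp
    finally show ?thesis using cycles False assms by simp
  qed (simp add: id_in_word_ball)
  moreover have "transpose 1 2 \<circ> transpose 1 y \<in> word_ball (puz_shifts n) (4 * n)"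
  proof (cases "y = 2")
    case False
    have "transpose 1 2 \<circ> transpose 1 y = cycle_of_list [2, 1, y]"
      using False assms by (intro transpose_comp_transpose_eq_cycle) auto
    then show ?thesis using cycles False assms by simp
  qed (simp add: id_in_word_ball)
  ultimately have "(transpose 1 x \<circ> transpose 1 2) \<circ> (transpose 1 2 \<circ> transpose 1 y)
      \<in> word_ball (puz_shifts n) (8 * n)"
    using word_ball_comp by fastforce
  moreover have "(transpose 1 x \<circ> transpose 1 2) \<circ> (transpose 1 2 \<circ> transpose 1 y)
      = transpose 1 x \<circ> transpose 1 y"
    by (simp add: fun_eq_iff)
  ultimately show ?thesis by simp
qed

lemma puz_even_star_product_in_word_ball:
  "even (length xs) \<Longrightarrow> set xs \<subseteq> {2..n} \<Longrightarrow>
    apply_transps (map (Pair 1) xs) \<in> word_ball (puz_shifts n) (4 * n * length xs)"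
proof (induction xs rule: induct_list012)
  case 1
  show ?case by (simp only: list.map apply_transps_Nil id_in_word_ball)
next
  case (3 x y zs)
  then have "(transpose 1 x \<circ> transpose 1 y) \<circ> apply_transps (map (Pair 1) zs)
      \<in> word_ball (puz_shifts n) (8 * n + 4 * n * length zs)"
    by (intro word_ball_comp puz_star_pair_in_word_ball) auto
  moreover have "(transpose 1 x \<circ> transpose 1 y) \<circ> apply_transps (map (Pair 1) zs)
      = apply_transps (map (Pair 1) (x # y # zs))"
    by (simp add: fun_eq_iff)
  moreover have "8 * n + 4 * n * length zs = 4 * n * length (x # y # zs)"
    by simp
  ultimately show ?case by (simp only:)
qed simp

theorem lemma1:
  shows "\<exists>K::nat. \<forall>b::nat. b > 1 \<longrightarrow>
    (\<forall>p. p permutes {1..b+1} \<and> evenperm p \<longrightarrow>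
      (\<exists>ws. set ws \<subseteq> puz_shifts (b+1) \<and> length ws \<le> K * (b+1)^2 \<and>
            p = foldr (\<circ>) ws id))"
proof (intro exI[of _ 12] allI impI, elim conjE)
  fix b :: nat and p
  assume p: "p permutes {1..b+1}" and even_p: "evenperm p"
  define n where "n = b + 1"
  obtain xs where xs: "set xs \<subseteq> {1..n} - {1}" "length xs \<le> 3 * n"
    "apply_transps (map (Pair 1) xs) = p"
    using permutes_from_star_transpositions[of "{1..n}" p 1] p by (auto simp: n_def)
  have "set xs \<subseteq> {2..n}"
    using xs(1) by auto
  moreover have "even (length xs)"
    using even_p xs evenperm_apply_transps_iff[of "map (Pair 1) xs"] by auto
  ultimately have "p \<in> word_ball (puz_shifts n) (4 * n * length xs)"
    using puz_even_star_product_in_word_ball xs(3) by metis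
  moreover have "4 * n * length xs \<le> 12 * n\<^sup>2"
    using xs(2) by (simp add: power2_eq_square)
  ultimately have "p \<in> word_ball (puz_shifts n) (12 * n\<^sup>2)"
    by (rule word_ball_mono)
  then show "\<exists>ws. set ws \<subseteq> puz_shifts (b+1) \<and> length ws \<le> 12 * (b+1)^2 \<and> p = foldr (\<circ>) ws id"
    unfolding word_ball_def n_def by blast
qed

end
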